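(* Let $m\in\mathbb{N}$. If $S\subseteq\mathbb{N}^{\mathbb{N}}$ is in $\mathbf{\Delta}'_{m+2}$, then $S$ is $m$th-order guessable.
   Context: Baire space $\mathbb{N}^{\mathbb{N}}$ carries the product of discrete topologies; $\mathbf{\Sigma}^0_n,\mathbf{\Pi}^0_n,\mathbf{\Delta}^0_n$ are the boldface Borel pointclasses. Definition: $\mathbf{\Delta}'_2=\mathbf{\Delta}^0_2$; for $k>2$, $S\in\mathbf{\Delta}'_k$ iff $S$ is a countable union of countable intersections of $\mathbf{\Delta}^0_{k-2}$ sets and also a countable intersection of countable unions of $\mathbf{\Delta}^0_{k-2}$ sets. The language $\mathscr{L}_{\max}$ is the first-order language (with equality) having: a constant symbol $\overline{n}$ for each $n\in\mathbb{N}$; an $n$-ary function symbol $\tilde w$ for each $w:\mathbb{N}^n\to\mathbb{N}$; an $n$-ary predicate symbol $\tilde p$ for each $p\subseteq\mathbb{N}^n$; a special unary function symbol $\mathbf{f}$; and, for every $n$ and every $G:\mathbb{N}^n\times\mathbb{N}^{<\mathbb{N}}\to\mathbb{N}$, an $(n+1)$-ary function symbol $G\circ\mathbf{f}$. For $f\in\mathbb{N}^{\mathbb{N}}$, $\mathscr{M}_f$ is the structure with universe $\mathbb{N}$ interpreting $\overline n$ as $n$, $\tilde w$ as $w$, $\tilde p$ as $p$, $\mathbf f$ as $f$, and $G\circ\mathbf f$ as $(m_1,\dots,m_n,m)\mapsto G(m_1,\dots,m_n,f(0),\dots,f(m))$. For a sentence $\phi$, $f(\phi)=1$ if $\mathscr{M}_f\models\phi$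 and $f(\phi)=0$ otherwise. Formula classes: "quantifier-free" means containing no quantifiers at all (not even bounded ones). $\Sigma_0=\Pi_0=\Delta_0$ is the set of quantifier-free formulas; $\Sigma_{n+1}=\{\exists x\,\phi:\phi\in\Pi_n\}$ and $\Pi_{n+1}=\{\forall x\,\phi:\phi\in\Sigma_n\}$; a formula is $\Delta_{n+1}$ if it is equivalent, in every structure $\mathscr{M}_f$ ($f\in\mathbb{N}^{\mathbb{N}}$), to some $\Sigma_{n+1}$ formula of $\mathscr{L}_{\max}$ and also to some $\Pi_{n+1}$ formula of $\mathscr{L}_{\max}$. For a set $\Sigma$ of symbols of $\mathscr{L}_{\max}$, a sentence "of $\mathscr{L}_{\max}\cap\Sigma$" is an $\mathscr{L}_{\max}$-sentence all of whose non-logical symbols lie in $\Sigma$. Definition ($m$th-order guessable): $S\subseteq\mathbb{N}^{\mathbb{N}}$ is $m$th-order guessable if there exist a countable set $\Sigma$ of $\mathscr{L}_{\max}$-symbols, a listing $\phi_0,\phi_1,\dots$ of all $\Delta_m$ sentences of $\mathscr{L}_{\max}\cap\Sigma$, and a function $G:\{0,1\}^{<\mathbb{N}}\to\mathbb{N}$ such that for every $f:\mathbb{N}\to\mathbb{N}$, $\lim_{n\to\infty}G(f(\phi_0),\dots,f(\phi_n))$ equals $1$ if $f\in S$ and $0$ if $f\notin S$. *)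

theory Defs
  imports "HOL-Analysis.Analysis"
begin

text \<open>bSigma n is the boldface class Sigma^0_n (meaningful for n >= 1).\<close>
fun bSigma :: "nat \<Rightarrow> (nat \<Rightarrow> nat) set set" where
  "bSigma 0 = {}"
| "bSigma (Suc 0) = {S. open S}"
| "bSigma (Suc (Suc n)) =
     {(\<Union>i::nat. - A i) | A. \<forall>i. A i \<in> bSigma (Suc n)}"

definition bPi :: "nat \<Rightarrow> (nat \<Rightarrow> nat) set set" where
  "bPi n = {- S | S. S \<in> bSigma n}"

definition bDelta :: "nat \<Rightarrow> (nat \<Rightarrow> nat) set set" where
  "bDelta n = bSigma n \<inter> bPi n"

text \<open>The class Delta'_k (meaningful for k >= 2).\<close>
definition DeltaP :: "nat \<Rightarrow> (nat \<Rightarrow> nat) set set" where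
  "DeltaP k = (if k \<le> 2 then bDelta 2 else
     {S. (\<exists>A. (\<forall>i j. A i j \<in> bDelta (k - 2)) \<and> S = (\<Union>i::nat. \<Inter>j::nat. A i j))
       \<and> (\<exists>B. (\<forall>i j. B i j \<in> bDelta (k - 2)) \<and> S = (\<Inter>i::nat. \<Union>j::nat. B i j))})"

text \<open>An n-ary function w : N^n -> N is represented by a function on
  lists that is canonical (0 off lists of length n); likewise predicates (False off arity n)
  and the symbols G o f (G xs ys = 0 when length xs ~= n).\<close>
datatype sym =
    SConst nat
  | SFun nat "nat list \<Rightarrow> nat"
  | SPred nat "nat list \<Rightarrow> bool"
  | SF
  | SGF nat "nat list \<Rightarrow> nat list \<Rightarrow> nat"

datatype trm =
    Var nat
  | Cst nat
  | App nat "nat list \<Rightarrow> nat" "trm list"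
  | FApp trm
  | GApp nat "nat list \<Rightarrow> nat list \<Rightarrow> nat" "trm list" trm

datatype fml =
    Eq trm trm
  | PredA nat "nat list \<Rightarrow> bool" "trm list"
  | Neg fml
  | Conj fml fml
  | Disj fml fml
  | Imp fml fml
  | Ex nat fml
  | All nat fml

fun wf_trm :: "trm \<Rightarrow> bool" where
  "wf_trm (Var x) = True"
| "wf_trm (Cst n) = True"
| "wf_trm (App n w ts) = (length ts = n \<and> (\<forall>xs. length xs \<noteq> n \<longrightarrow> w xs = 0)
      \<and> (\<forall>t\<in>set ts. wf_trm t))"
| "wf_trm (FApp t) = wf_trm t"
| "wf_trm (GApp n G ts t) = (length ts = n \<and> (\<forall>xs ys. length xs \<noteq> n \<longrightarrow> G xs ys = 0)
      \<and> (\<forall>s\<in>set ts. wf_trm s) \<and> wf_trm t)"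

fun wf_fml :: "fml \<Rightarrow> bool" where
  "wf_fml (Eq s t) = (wf_trm s \<and> wf_trm t)"
| "wf_fml (PredA n p ts) = (length ts = n \<and> (\<forall>xs. length xs \<noteq> n \<longrightarrow> \<not> p xs)
      \<and> (\<forall>t\<in>set ts. wf_trm t))"
| "wf_fml (Neg \<phi>) = wf_fml \<phi>"
| "wf_fml (Conj \<phi> \<psi>) = (wf_fml \<phi> \<and> wf_fml \<psi>)"
| "wf_fml (Disj \<phi> \<psi>) = (wf_fml \<phi> \<and> wf_fml \<psi>)"
| "wf_fml (Imp \<phi> \<psi>) = (wf_fml \<phi> \<and> wf_fml \<psi>)"
| "wf_fml (Ex x \<phi>) = wf_fml \<phi>"
| "wf_fml (All x \<phi>) = wf_fml \<phi>"

fun fv_trm :: "trm \<Rightarrow> nat set" where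
  "fv_trm (Var x) = {x}"
| "fv_trm (Cst n) = {}"
| "fv_trm (App n w ts) = \<Union> (set (map fv_trm ts))"
| "fv_trm (FApp t) = fv_trm t"
| "fv_trm (GApp n G ts t) = \<Union> (set (map fv_trm ts)) \<union> fv_trm t"

fun fv_fml :: "fml \<Rightarrow> nat set" where
  "fv_fml (Eq s t) = fv_trm s \<union> fv_trm t"
| "fv_fml (PredA n p ts) = \<Union> (set (map fv_trm ts))"
| "fv_fml (Neg \<phi>) = fv_fml \<phi>"
| "fv_fml (Conj \<phi> \<psi>) = fv_fml \<phi> \<union> fv_fml \<psi>"
| "fv_fml (Disj \<phi> \<psi>) = fv_fml \<phi> \<union> fv_fml \<psi>"
| "fv_fml (Imp \<phi> \<psi>) = fv_fml \<phi> \<union> fv_fml \<psi>"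
| "fv_fml (Ex x \<phi>) = fv_fml \<phi> - {x}"
| "fv_fml (All x \<phi>) = fv_fml \<phi> - {x}"

fun syms_trm :: "trm \<Rightarrow> sym set" where
  "syms_trm (Var x) = {}"
| "syms_trm (Cst n) = {SConst n}"
| "syms_trm (App n w ts) = insert (SFun n w) (\<Union> (set (map syms_trm ts)))"
| "syms_trm (FApp t) = insert SF (syms_trm t)"
| "syms_trm (GApp n G ts t) = insert (SGF n G) (\<Union> (set (map syms_trm ts)) \<union> syms_trm t)"

fun syms_fml :: "fml \<Rightarrow> sym set" where
  "syms_fml (Eq s t) = syms_trm s \<union> syms_trm t"
| "syms_fml (PredA n p ts) = insert (SPred n p) (\<Union> (set (map syms_trm ts)))"
| "syms_fml (Neg \<phi>) = syms_fml \<phi>"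
| "syms_fml (Conj \<phi> \<psi>) = syms_fml \<phi> \<union> syms_fml \<psi>"
| "syms_fml (Disj \<phi> \<psi>) = syms_fml \<phi> \<union> syms_fml \<psi>"
| "syms_fml (Imp \<phi> \<psi>) = syms_fml \<phi> \<union> syms_fml \<psi>"
| "syms_fml (Ex x \<phi>) = syms_fml \<phi>"
| "syms_fml (All x \<phi>) = syms_fml \<phi>"

definition sentence :: "fml \<Rightarrow> bool" where
  "sentence \<phi> \<longleftrightarrow> wf_fml \<phi> \<and> fv_fml \<phi> = {}"

fun eval :: "(nat \<Rightarrow> nat) \<Rightarrow> (nat \<Rightarrow> nat) \<Rightarrow> trm \<Rightarrow> nat" where
  "eval f e (Var x) = e x"
| "eval f e (Cst n) = n"
| "eval f e (App n w ts) = w (map (eval f e) ts)"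
| "eval f e (FApp t) = f (eval f e t)"
| "eval f e (GApp n G ts t) = G (map (eval f e) ts) (map f [0..<Suc (eval f e t)])"

fun sat :: "(nat \<Rightarrow> nat) \<Rightarrow> (nat \<Rightarrow> nat) \<Rightarrow> fml \<Rightarrow> bool" where
  "sat f e (Eq s t) = (eval f e s = eval f e t)"
| "sat f e (PredA n p ts) = p (map (eval f e) ts)"
| "sat f e (Neg \<phi>) = (\<not> sat f e \<phi>)"
| "sat f e (Conj \<phi> \<psi>) = (sat f e \<phi> \<and> sat f e \<psi>)"
| "sat f e (Disj \<phi> \<psi>) = (sat f e \<phi> \<or> sat f e \<psi>)"
| "sat f e (Imp \<phi> \<psi>) = (sat f e \<phi> \<longrightarrow> sat f e \<psi>)"
| "sat f e (Ex x \<phi>) = (\<exists>n. sat f (e(x := n)) \<phi>)"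
| "sat f e (All x \<phi>) = (\<forall>n. sat f (e(x := n)) \<phi>)"

text \<open>f(phi) for a sentence phi (the valuation is irrelevant for sentences).\<close>
definition fval :: "(nat \<Rightarrow> nat) \<Rightarrow> fml \<Rightarrow> bool" where
  "fval f \<phi> = sat f (\<lambda>_. 0) \<phi>"

fun qfree :: "fml \<Rightarrow> bool" where
  "qfree (Eq s t) = True"
| "qfree (PredA n p ts) = True"
| "qfree (Neg \<phi>) = qfree \<phi>"
| "qfree (Conj \<phi> \<psi>) = (qfree \<phi> \<and> qfree \<psi>)"
| "qfree (Disj \<phi> \<psi>) = (qfree \<phi> \<and> qfree \<psi>)"
| "qfree (Imp \<phi> \<psi>) = (qfree \<phi> \<and> qfree \<psi>)"
| "qfree (Ex x \<phi>) = False"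
| "qfree (All x \<phi>) = False"

fun SigmaF :: "nat \<Rightarrow> fml \<Rightarrow> bool" and PiF :: "nat \<Rightarrow> fml \<Rightarrow> bool" where
  "SigmaF 0 \<phi> = qfree \<phi>"
| "PiF 0 \<phi> = qfree \<phi>"
| "SigmaF (Suc n) \<phi> = (\<exists>x \<psi>. \<phi> = Ex x \<psi> \<and> PiF n \<psi>)"
| "PiF (Suc n) \<phi> = (\<exists>x \<psi>. \<phi> = All x \<psi> \<and> SigmaF n \<psi>)"

definition fml_equiv :: "fml \<Rightarrow> fml \<Rightarrow> bool" where
  "fml_equiv \<phi> \<psi> \<longleftrightarrow> (\<forall>f e. sat f e \<phi> = sat f e \<psi>)"

fun DeltaF :: "nat \<Rightarrow> fml \<Rightarrow> bool" where
  "DeltaF 0 \<phi> = qfree \<phi>"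
| "DeltaF (Suc n) \<phi> =
     ((\<exists>\<psi>. wf_fml \<psi> \<and> SigmaF (Suc n) \<psi> \<and> fml_equiv \<phi> \<psi>)
    \<and> (\<exists>\<psi>. wf_fml \<psi> \<and> PiF (Suc n) \<psi> \<and> fml_equiv \<phi> \<psi>))"

definition guessable :: "nat \<Rightarrow> (nat \<Rightarrow> nat) set \<Rightarrow> bool" where
  "guessable m S \<longleftrightarrow>
     (\<exists>(Sig :: sym set) (\<phi> :: nat \<Rightarrow> fml) (G :: bool list \<Rightarrow> nat).
        countable Sig
      \<and> range \<phi> = {\<psi>. sentence \<psi> \<and> DeltaF m \<psi> \<and> syms_fml \<psi> \<subseteq> Sig}
      \<and> (\<forall>f. (\<lambda>n. G (map (\<lambda>i. fval f (\<phi> i)) [0..<Suc n]))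
               \<longlonglongrightarrow> (if f \<in> S then 1 else 0)))"

end

theory Submission
  imports Defs
begin

(* A set S in Delta'_(m+2) is, together with its complement, a countable union of countable
   intersections of sets C that are "definable of level m", i.e. C = {f. M_f |= sigma} for a
   Delta_m sentence sigma.  For m = 0 this uses that a basic open set of Baire space is decided
   by one value of a symbol G o f, so closed sets are countable intersections of sets defined by
   quantifier-free sentences; for m > 0 it uses that every boldface Sigma^0_n family is defined
   by a Sigma_n formula (by induction on n, the base case again via the symbols G o f), so
   Delta^0_n sets are defined by Delta_n sentences.
   Given such representations S = U_i N_j A_ij and -S = U_i N_j B_ij, interleave them into rows
   R_0 = A_0, R_1 = B_0, R_2 = A_1, ...  and enumerate all Delta_m sentences over the (countable)
   signature they use.  The guess after reading n truth values is the parity of the least row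
   not yet refuted by the values seen; it stabilises on the least row that holds entirely,
   whose parity tells whether f is in S. *)

definition cyl :: "nat list \<Rightarrow> (nat \<Rightarrow> nat) set" where
  "cyl ys = {g. \<forall>i<length ys. g i = ys ! i}"

(* Every open subset of Baire space contains a basic open set around each of its points:
   the product topology constrains only finitely many coordinates. *)
lemma open_contains_cylinder:
  fixes A :: "(nat \<Rightarrow> nat) set"
  assumes "open A" "f \<in> A"
  shows "\<exists>n. cyl (map f [0..<Suc n]) \<subseteq> A"
proof -
  have "openin (product_topology (\<lambda>i. euclidean) UNIV) A"
    using assms(1) unfolding open_fun_def by auto
  from product_topology_open_contains_basis[OF this assms(2)]
  obtain X where X: "f \<in> (\<Pi>\<^sub>E i\<in>UNIV. X i)" "finite {i. X i \<noteq> UNIV}" "(\<Pi>\<^sub>E i\<in>UNIV. X i) \<subseteq> A"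
    by auto
  obtain n where n: "{i. X i \<noteq> UNIV} \<subseteq> {..<n}"
    using finite_nat_bounded[OF X(2)] by blast
  have "g \<in> (\<Pi>\<^sub>E i\<in>UNIV. X i)" if "g \<in> cyl (map f [0..<Suc n])" for g
  proof -
    have "g i = f i" if "i < n" for i
      using \<open>g \<in> cyl _\<close> that unfolding cyl_def by (auto simp del: upt_Suc simp: nth_map)
    moreover have "f i \<in> X i" for i using X(1) by auto
    ultimately have "g i \<in> X i" for i
      using n by (cases "X i = UNIV") auto
    then show ?thesis by auto
  qed
  then show ?thesis using X(3) by blast
qed

lemma open_iff_cylinder:
  fixes A :: "(nat \<Rightarrow> nat) set"
  assumes "open A"
  shows "f \<in> A \<longleftrightarrow> (\<exists>n. cyl (map f [0..<Suc n]) \<subseteq> A)"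
proof
  assume "\<exists>n. cyl (map f [0..<Suc n]) \<subseteq> A"
  moreover have "f \<in> cyl (map f [0..<Suc n])" for n
    unfolding cyl_def by (auto simp del: upt_Suc)
  ultimately show "f \<in> A" by blast
qed (use open_contains_cylinder[OF assms] in blast)

(* The atomic formula "the cylinder of f(0..t) lies inside A(ts)", expressed with a single
   symbol G o f; it is the only place where the symbols G o f are needed. *)
definition cyl_inside :: "(nat list \<Rightarrow> (nat \<Rightarrow> nat) set) \<Rightarrow> trm list \<Rightarrow> trm \<Rightarrow> fml" where
  "cyl_inside A ts t =
     Eq (GApp (length ts) (\<lambda>xs ys. if length xs = length ts \<and> cyl ys \<subseteq> A xs then 1 else 0) ts t)
        (Cst 1)"

lemma sat_cyl_inside:
  "sat f e (cyl_inside A ts t) \<longleftrightarrow> cyl (map f [0..<Suc (eval f e t)]) \<subseteq> A (map (eval f e) ts)"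
  unfolding cyl_inside_def by (simp del: upt_Suc)

lemma cyl_inside_wf:
  "(\<forall>s\<in>set ts. wf_trm s) \<Longrightarrow> wf_trm t \<Longrightarrow> wf_fml (cyl_inside A ts t)"
  unfolding cyl_inside_def by auto

lemma cyl_inside_shape:
  "qfree (cyl_inside A ts t)"
  "fv_fml (cyl_inside A ts t) = \<Union> (set (map fv_trm ts)) \<union> fv_trm t"
  unfolding cyl_inside_def by auto

fun dual :: "fml \<Rightarrow> fml" where
  "dual (Ex x \<phi>) = All x (dual \<phi>)"
| "dual (All x \<phi>) = Ex x (dual \<phi>)"
| "dual \<phi> = Neg \<phi>"

lemma sat_dual [simp]: "sat f e (dual \<phi>) = (\<not> sat f e \<phi>)"
  by (induction \<phi> arbitrary: e rule: dual.induct) auto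

lemma wf_dual [simp]: "wf_fml (dual \<phi>) = wf_fml \<phi>"
  by (induction \<phi> rule: dual.induct) auto

lemma fv_dual [simp]: "fv_fml (dual \<phi>) = fv_fml \<phi>"
  by (induction \<phi> rule: dual.induct) auto

lemma dual_SigmaF_PiF:
  "(SigmaF n \<phi> \<longrightarrow> PiF n (dual \<phi>)) \<and> (PiF n \<phi> \<longrightarrow> SigmaF n (dual \<phi>))"
proof (induction n arbitrary: \<phi>)
  case 0
  then show ?case by (cases \<phi>) auto
qed auto

definition represents :: "nat \<Rightarrow> fml \<Rightarrow> (nat list \<Rightarrow> (nat \<Rightarrow> nat) set) \<Rightarrow> bool" where
  "represents k \<psi> A \<longleftrightarrow> wf_fml \<psi> \<and> fv_fml \<psi> \<subseteq> {..<k}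
     \<and> (\<forall>f e. sat f e \<psi> \<longleftrightarrow> f \<in> A (map e [0..<k]))"

lemma represents_open_family:
  assumes "\<And>ps. open (A ps)"
  shows "represents k (Ex k (cyl_inside A (map Var [0..<k]) (Var k))) A"
proof -
  have vars: "map (eval f (e(k := n)) \<circ> Var) [0..<k] = map e [0..<k]" for f e n
    by (simp add: comp_def)
  have "sat f (e(k := n)) (cyl_inside A (map Var [0..<k]) (Var k)) \<longleftrightarrow>
             cyl (map f [0..<Suc n]) \<subseteq> A (map e [0..<k])" for f e n
    unfolding sat_cyl_inside by (simp add: vars del: upt_Suc)
  then have "sat f e (Ex k (cyl_inside A (map Var [0..<k]) (Var k))) \<longleftrightarrow> f \<in> A (map e [0..<k])"
    for f e
    using open_iff_cylinder[OF assms, of f "map e [0..<k]"] by simp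
  then show ?thesis
    unfolding represents_def by (auto simp: cyl_inside_wf cyl_inside_shape)
qed

lemma represents_union_compl:
  assumes "represents (Suc k) \<psi> (\<lambda>qs. B (butlast qs) (last qs))"
  shows "represents k (Ex k (dual \<psi>)) (\<lambda>ps. \<Union>i. - B ps i)"
proof -
  have "map (e(k := i)) [0..<Suc k] = map e [0..<k] @ [i]" for e i
    by auto
  then show ?thesis
    using assms unfolding represents_def by auto
qed

lemma Sigma_family_definable:
  assumes "\<And>ps. A ps \<in> bSigma (Suc n)"
  shows "\<exists>\<psi>. SigmaF (Suc n) \<psi> \<and> represents k \<psi> A"
  using assms
proof (induction n arbitrary: A k)
  case 0
  then have "\<And>ps. open (A ps)" by simp
  moreover have "SigmaF (Suc 0) (Ex k (cyl_inside A (map Var [0..<k]) (Var k)))"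
    by (simp add: cyl_inside_shape)
  ultimately show ?case
    using represents_open_family[of A k] by blast
next
  case (Suc n)
  have "\<forall>ps. \<exists>B. (\<forall>i::nat. B i \<in> bSigma (Suc n)) \<and> A ps = (\<Union>i. - B i)"
  proof
    fix ps
    obtain C :: "nat \<Rightarrow> (nat \<Rightarrow> nat) set"
      where "A ps = (\<Union>i. - C i)" "\<forall>i. C i \<in> bSigma (Suc n)"
      using Suc.prems[of ps] by auto
    then show "\<exists>B. (\<forall>i::nat. B i \<in> bSigma (Suc n)) \<and> A ps = (\<Union>i. - B i)" by blast
  qed
  then obtain B :: "nat list \<Rightarrow> nat \<Rightarrow> (nat \<Rightarrow> nat) set"
    where B: "\<And>ps i. B ps i \<in> bSigma (Suc n)" "\<And>ps. A ps = (\<Union>i. - B ps i)"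
    by metis
  have "\<exists>\<psi>. SigmaF (Suc n) \<psi> \<and> represents (Suc k) \<psi> (\<lambda>qs. B (butlast qs) (last qs))"
    by (rule Suc.IH) (rule B(1))
  then obtain \<psi> where \<psi>: "SigmaF (Suc n) \<psi>" "represents (Suc k) \<psi> (\<lambda>qs. B (butlast qs) (last qs))"
    by blast
  have "SigmaF (Suc (Suc n)) (Ex k (dual \<psi>))"
    using \<psi>(1) dual_SigmaF_PiF by auto
  moreover have "A = (\<lambda>ps. \<Union>i. - B ps i)"
    using B(2) by auto
  then have "represents k (Ex k (dual \<psi>)) A"
    using represents_union_compl[OF \<psi>(2)] by simp
  ultimately show ?case by blast
qed

definition definable :: "nat \<Rightarrow> (nat \<Rightarrow> nat) set \<Rightarrow> bool" where
  "definable m C \<longleftrightarrow> (\<exists>\<sigma>. sentence \<sigma> \<and> DeltaF m \<sigma> \<and> (\<forall>f. fval f \<sigma> \<longleftrightarrow> f \<in> C))"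

lemma DeltaF_Neg:
  assumes "DeltaF m \<sigma>"
  shows "DeltaF m (Neg \<sigma>)"
proof (cases m)
  case (Suc n)
  obtain \<psi>1 \<psi>2 where \<psi>1: "wf_fml \<psi>1" "SigmaF (Suc n) \<psi>1" "fml_equiv \<sigma> \<psi>1"
    and \<psi>2: "wf_fml \<psi>2" "PiF (Suc n) \<psi>2" "fml_equiv \<sigma> \<psi>2"
    using assms unfolding Suc DeltaF.simps by blast
  have "wf_fml (dual \<psi>2) \<and> SigmaF (Suc n) (dual \<psi>2) \<and> fml_equiv (Neg \<sigma>) (dual \<psi>2)"
    using \<psi>2 dual_SigmaF_PiF unfolding fml_equiv_def by auto
  moreover have "wf_fml (dual \<psi>1) \<and> PiF (Suc n) (dual \<psi>1) \<and> fml_equiv (Neg \<sigma>) (dual \<psi>1)"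
    using \<psi>1 dual_SigmaF_PiF unfolding fml_equiv_def by auto
  ultimately show ?thesis
    unfolding Suc DeltaF.simps by blast
qed (use assms in simp)

lemma definable_compl:
  assumes "definable m C"
  shows "definable m (- C)"
proof -
  obtain \<sigma> where \<sigma>: "sentence \<sigma>" "DeltaF m \<sigma>" "\<forall>f. fval f \<sigma> \<longleftrightarrow> f \<in> C"
    using assms unfolding definable_def by blast
  have "sentence (Neg \<sigma>)" "\<forall>f. fval f (Neg \<sigma>) \<longleftrightarrow> f \<in> - C"
    using \<sigma> unfolding sentence_def fval_def by auto
  then show ?thesis
    unfolding definable_def using DeltaF_Neg[OF \<sigma>(2)] by blast
qed

lemma Sigma_set_sentence:
  assumes "C \<in> bSigma (Suc n)"
  shows "\<exists>\<sigma>. SigmaF (Suc n) \<sigma> \<and> sentence \<sigma> \<and> (\<forall>f e. sat f e \<sigma> \<longleftrightarrow> f \<in> C)"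
proof -
  obtain \<sigma> where "SigmaF (Suc n) \<sigma>" "represents 0 \<sigma> (\<lambda>_. C)"
    using Sigma_family_definable[of "\<lambda>_. C" n 0] assms by blast
  then show ?thesis
    unfolding represents_def sentence_def by auto
qed

(* Delta^0_(n+1) sets are defined by Delta_(n+1) sentences: a Sigma sentence for C is
   equivalent to the Pi sentence obtained by dualising a Sigma sentence for -C. *)
lemma bDelta_definable:
  assumes "C \<in> bDelta (Suc n)"
  shows "definable (Suc n) C"
proof -
  have "C \<in> bSigma (Suc n)" "- C \<in> bSigma (Suc n)"
    using assms unfolding bDelta_def bPi_def by auto
  then obtain \<sigma> \<tau> where \<sigma>: "SigmaF (Suc n) \<sigma>" "sentence \<sigma>" "\<forall>f e. sat f e \<sigma> \<longleftrightarrow> f \<in> C"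
    and \<tau>: "SigmaF (Suc n) \<tau>" "sentence \<tau>" "\<forall>f e. sat f e \<tau> \<longleftrightarrow> f \<in> - C"
    by (elim Sigma_set_sentence[elim_format] exE conjE)
  have "wf_fml \<sigma> \<and> SigmaF (Suc n) \<sigma> \<and> fml_equiv \<sigma> \<sigma>"
    using \<sigma> unfolding sentence_def fml_equiv_def by auto
  moreover have "wf_fml (dual \<tau>) \<and> PiF (Suc n) (dual \<tau>) \<and> fml_equiv \<sigma> (dual \<tau>)"
    using \<sigma> \<tau> dual_SigmaF_PiF unfolding sentence_def fml_equiv_def by auto
  ultimately have "DeltaF (Suc n) \<sigma>"
    unfolding DeltaF.simps by blast
  then show ?thesis
    unfolding definable_def fval_def using \<sigma> by blast
qed

(* A closed set is a countable intersection of sets defined by quantifier-free sentences: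
   f avoids U iff no cylinder of f lies inside U. *)
lemma closed_definable0:
  assumes "open U"
  shows "\<exists>C. (\<forall>j::nat. definable 0 (C j)) \<and> - U = (\<Inter>j. C j)"
proof -
  define C where "C j = {f. \<not> cyl (map f [0..<Suc j]) \<subseteq> U}" for j
  have "\<forall>j. definable 0 (C j)"
  proof
    fix j
    define \<sigma> where "\<sigma> = Neg (cyl_inside (\<lambda>_. U) [] (Cst j))"
    have "sentence \<sigma>" "DeltaF 0 \<sigma>"
      unfolding \<sigma>_def sentence_def by (auto simp: cyl_inside_wf cyl_inside_shape)
    moreover have "fval f \<sigma> \<longleftrightarrow> f \<in> C j" for f
      unfolding \<sigma>_def C_def fval_def by (simp add: sat_cyl_inside del: upt_Suc)
    ultimately show "definable 0 (C j)"
      unfolding definable_def by blast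
  qed
  moreover have "f \<in> - U \<longleftrightarrow> f \<in> (\<Inter>j. C j)" for f
    unfolding C_def Compl_iff open_iff_cylinder[OF assms, of f] by blast
  then have "- U = (\<Inter>j. C j)"
    by blast
  ultimately show ?thesis
    by (rule exI[of _ C, OF conjI])
qed

definition sigma2_definable :: "nat \<Rightarrow> (nat \<Rightarrow> nat) set \<Rightarrow> bool" where
  "sigma2_definable m S \<longleftrightarrow>
     (\<exists>A. (\<forall>i j. definable m (A i j)) \<and> S = (\<Union>i::nat. \<Inter>j::nat. A i j))"

lemma bSigma2_sigma2_definable:
  assumes "T \<in> bSigma 2"
  shows "sigma2_definable 0 T"
proof -
  obtain A :: "nat \<Rightarrow> (nat \<Rightarrow> nat) set" where A: "\<forall>i. open (A i)" "T = (\<Union>i. - A i)"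
    using assms by (auto simp: numeral_2_eq_2)
  have "\<forall>i. \<exists>C. (\<forall>j::nat. definable 0 (C j)) \<and> - A i = (\<Inter>j. C j)"
    using A(1) closed_definable0 by blast
  then obtain C :: "nat \<Rightarrow> nat \<Rightarrow> (nat \<Rightarrow> nat) set"
    where "\<forall>i j. definable 0 (C i j)" "\<forall>i. - A i = (\<Inter>j. C i j)"
    by metis
  then show ?thesis
    unfolding sigma2_definable_def A(2) by (intro exI[of _ C]) simp
qed

lemma DeltaP_sigma2_definable:
  assumes "S \<in> DeltaP (m + 2)"
  shows "sigma2_definable m S \<and> sigma2_definable m (- S)"
proof (cases m)
  case 0
  then have "S \<in> bDelta 2"
    using assms unfolding DeltaP_def by simp
  then have "S \<in> bSigma 2" "- S \<in> bSigma 2"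
    unfolding bDelta_def bPi_def by auto
  then show ?thesis
    using 0 bSigma2_sigma2_definable by blast
next
  case (Suc n)
  then have "S \<in> {S. (\<exists>A. (\<forall>i j. A i j \<in> bDelta (Suc n)) \<and> S = (\<Union>i::nat. \<Inter>j::nat. A i j))
       \<and> (\<exists>B. (\<forall>i j. B i j \<in> bDelta (Suc n)) \<and> S = (\<Inter>i::nat. \<Union>j::nat. B i j))}"
    using assms unfolding DeltaP_def by simp
  then obtain A B :: "nat \<Rightarrow> nat \<Rightarrow> (nat \<Rightarrow> nat) set"
    where A: "\<forall>i j. A i j \<in> bDelta (Suc n)" "S = (\<Union>i. \<Inter>j. A i j)"
      and B: "\<forall>i j. B i j \<in> bDelta (Suc n)" "S = (\<Inter>i. \<Union>j. B i j)"
    by blast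
  have "sigma2_definable m S"
    unfolding sigma2_definable_def Suc using A bDelta_definable
    by (intro exI[of _ A]) simp
  moreover have "- S = (\<Union>i. \<Inter>j. - B i j)"
    using B(2) by blast
  then have "sigma2_definable m (- S)"
    unfolding sigma2_definable_def Suc using B(1) bDelta_definable definable_compl
    by (intro exI[of _ "\<lambda>i j. - B i j"]) simp
  ultimately show ?thesis by blast
qed

lemma finite_syms_trm: "finite (syms_trm t)"
  by (induction t) auto

lemma finite_syms_fml: "finite (syms_fml \<phi>)"
  by (induction \<phi>) (auto simp: finite_syms_trm)

(* Formulas over a countable signature Sig are coded by finite trees of natural numbers,
   replacing each symbol by its index in Sig; decoding inverts encoding, so there are only
   countably many formulas over Sig. *)
datatype code_trm = CVar nat | CCst nat | CApp nat "code_trm list" | CFApp code_trm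
  | CGApp nat "code_trm list" code_trm

datatype code_fml = CEq code_trm code_trm | CPred nat "code_trm list" | CNeg code_fml
  | CConj code_fml code_fml | CDisj code_fml code_fml | CImp code_fml code_fml
  | CEx nat code_fml | CAll nat code_fml

instance code_trm :: countable by countable_datatype
instance code_fml :: countable by countable_datatype

fun encode_trm :: "sym set \<Rightarrow> trm \<Rightarrow> code_trm" where
  "encode_trm Sig (Var x) = CVar x"
| "encode_trm Sig (Cst n) = CCst n"
| "encode_trm Sig (App n w ts) = CApp (to_nat_on Sig (SFun n w)) (map (encode_trm Sig) ts)"
| "encode_trm Sig (FApp t) = CFApp (encode_trm Sig t)"
| "encode_trm Sig (GApp n G ts t) =
     CGApp (to_nat_on Sig (SGF n G)) (map (encode_trm Sig) ts) (encode_trm Sig t)"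

fun encode_fml :: "sym set \<Rightarrow> fml \<Rightarrow> code_fml" where
  "encode_fml Sig (Eq s t) = CEq (encode_trm Sig s) (encode_trm Sig t)"
| "encode_fml Sig (PredA n p ts) = CPred (to_nat_on Sig (SPred n p)) (map (encode_trm Sig) ts)"
| "encode_fml Sig (Neg \<phi>) = CNeg (encode_fml Sig \<phi>)"
| "encode_fml Sig (Conj \<phi> \<psi>) = CConj (encode_fml Sig \<phi>) (encode_fml Sig \<psi>)"
| "encode_fml Sig (Disj \<phi> \<psi>) = CDisj (encode_fml Sig \<phi>) (encode_fml Sig \<psi>)"
| "encode_fml Sig (Imp \<phi> \<psi>) = CImp (encode_fml Sig \<phi>) (encode_fml Sig \<psi>)"
| "encode_fml Sig (Ex x \<phi>) = CEx x (encode_fml Sig \<phi>)"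
| "encode_fml Sig (All x \<phi>) = CAll x (encode_fml Sig \<phi>)"

fun decode_trm :: "sym set \<Rightarrow> code_trm \<Rightarrow> trm" where
  "decode_trm Sig (CVar x) = Var x"
| "decode_trm Sig (CCst n) = Cst n"
| "decode_trm Sig (CApp c ts) = (case from_nat_into Sig c of
      SFun n w \<Rightarrow> App n w (map (decode_trm Sig) ts) | _ \<Rightarrow> Var 0)"
| "decode_trm Sig (CFApp t) = FApp (decode_trm Sig t)"
| "decode_trm Sig (CGApp c ts t) = (case from_nat_into Sig c of
      SGF n G \<Rightarrow> GApp n G (map (decode_trm Sig) ts) (decode_trm Sig t) | _ \<Rightarrow> Var 0)"

fun decode_fml :: "sym set \<Rightarrow> code_fml \<Rightarrow> fml" where
  "decode_fml Sig (CEq s t) = Eq (decode_trm Sig s) (decode_trm Sig t)"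
| "decode_fml Sig (CPred c ts) = (case from_nat_into Sig c of
      SPred n p \<Rightarrow> PredA n p (map (decode_trm Sig) ts) | _ \<Rightarrow> Eq (Var 0) (Var 0))"
| "decode_fml Sig (CNeg \<phi>) = Neg (decode_fml Sig \<phi>)"
| "decode_fml Sig (CConj \<phi> \<psi>) = Conj (decode_fml Sig \<phi>) (decode_fml Sig \<psi>)"
| "decode_fml Sig (CDisj \<phi> \<psi>) = Disj (decode_fml Sig \<phi>) (decode_fml Sig \<psi>)"
| "decode_fml Sig (CImp \<phi> \<psi>) = Imp (decode_fml Sig \<phi>) (decode_fml Sig \<psi>)"
| "decode_fml Sig (CEx x \<phi>) = Ex x (decode_fml Sig \<phi>)"
| "decode_fml Sig (CAll x \<phi>) = All x (decode_fml Sig \<phi>)"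

lemma decode_encode_trm:
  "countable Sig \<Longrightarrow> syms_trm t \<subseteq> Sig \<Longrightarrow> decode_trm Sig (encode_trm Sig t) = t"
  by (induction t) (auto intro!: map_idI simp: UN_subset_iff)

lemma decode_encode_fml:
  "countable Sig \<Longrightarrow> syms_fml \<phi> \<subseteq> Sig \<Longrightarrow> decode_fml Sig (encode_fml Sig \<phi>) = \<phi>"
  by (induction \<phi>) (auto simp: decode_encode_trm UN_subset_iff intro!: map_idI)

lemma countable_fmls_over:
  assumes "countable Sig"
  shows "countable {\<phi>. syms_fml \<phi> \<subseteq> Sig}"
proof (rule countable_subset)
  show "{\<phi>. syms_fml \<phi> \<subseteq> Sig} \<subseteq> range (decode_fml Sig)"
    using decode_encode_fml[OF assms] by (metis (mono_tags) mem_Collect_eq rangeI subsetI)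
qed simp

lemma enumerate_sentences:
  fixes d :: "nat \<Rightarrow> nat \<Rightarrow> fml"
  assumes "\<And>k j. sentence (d k j) \<and> DeltaF m (d k j)"
  obtains Sig :: "sym set" and \<phi> :: "nat \<Rightarrow> fml" and pos :: "nat \<Rightarrow> nat \<Rightarrow> nat"
  where "countable Sig"
    "range \<phi> = {\<psi>. sentence \<psi> \<and> DeltaF m \<psi> \<and> syms_fml \<psi> \<subseteq> Sig}"
    "\<And>k j. \<phi> (pos k j) = d k j"
proof -
  define Sig where "Sig = (\<Union>k. \<Union>j. syms_fml (d k j))"
  define D where "D = {\<psi>. sentence \<psi> \<and> DeltaF m \<psi> \<and> syms_fml \<psi> \<subseteq> Sig}"
  have cSig: "countable Sig"
    unfolding Sig_def using finite_syms_fml countable_finite by blast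
  have dD: "d k j \<in> D" for k j
    unfolding D_def Sig_def using assms by blast
  have cD: "countable D"
    using countable_fmls_over[OF cSig] unfolding D_def by (rule countable_subset[rotated]) auto
  show ?thesis
  proof (rule that[OF cSig, of "from_nat_into D" "\<lambda>k j. to_nat_on D (d k j)"])
    show "range (from_nat_into D) = {\<psi>. sentence \<psi> \<and> DeltaF m \<psi> \<and> syms_fml \<psi> \<subseteq> Sig}"
      using dD cD unfolding D_def[symmetric] by (intro range_from_nat_into) blast+
    show "from_nat_into D (to_nat_on D (d k j)) = d k j" for k j
      using cD dD by simp
  qed
qed

definition row_passes :: "(nat \<Rightarrow> nat \<Rightarrow> nat) \<Rightarrow> bool list \<Rightarrow> nat \<Rightarrow> bool" where
  "row_passes pos bs k \<longleftrightarrow> (\<forall>j. pos k j < length bs \<longrightarrow> bs ! pos k j)"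

(* Once the first truth values have been read, every row before the least true row has been
   refuted, while that row never is; so the least unrefuted row stabilises. *)
lemma least_passing_row_eventually:
  fixes b :: "nat \<Rightarrow> bool" and pos :: "nat \<Rightarrow> nat \<Rightarrow> nat"
  assumes "\<exists>k. \<forall>j. b (pos k j)"
  shows "\<forall>\<^sub>F n in sequentially.
           (LEAST k. row_passes pos (map b [0..<Suc n]) k) = (LEAST k. \<forall>j. b (pos k j))"
proof -
  define k0 where "k0 = (LEAST k. \<forall>j. b (pos k j))"
  have k0: "b (pos k0 j)" for j
    using LeastI_ex[OF assms] unfolding k0_def by blast
  have "\<exists>j. \<not> b (pos k j)" if "k < k0" for k
    using not_less_Least[OF that[unfolded k0_def]] by blast
  then obtain jj where jj: "\<And>k. k < k0 \<Longrightarrow> \<not> b (pos k (jj k))"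
    by metis
  define N where "N = (\<Sum>k<k0. pos k (jj k))"
  have "(LEAST k. row_passes pos (map b [0..<Suc n]) k) = k0" if "N \<le> n" for n
  proof (rule Least_equality)
    show "row_passes pos (map b [0..<Suc n]) k0"
      unfolding row_passes_def using k0 by (simp del: upt_Suc)
    show "k0 \<le> k" if "row_passes pos (map b [0..<Suc n]) k" for k
    proof (rule ccontr)
      assume "\<not> k0 \<le> k"
      then have "k < k0" by simp
      then have "pos k (jj k) \<le> n"
        using member_le_sum[of k "{..<k0}" "\<lambda>k. pos k (jj k)"] \<open>N \<le> n\<close> unfolding N_def by simp
      then show False
        using that jj[OF \<open>k < k0\<close>] unfolding row_passes_def by (simp del: upt_Suc)
    qed
  qed
  then show ?thesis
    unfolding eventually_sequentially k0_def by blast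
qed

definition interleave :: "(nat \<Rightarrow> 'a) \<Rightarrow> (nat \<Rightarrow> 'a) \<Rightarrow> nat \<Rightarrow> 'a" where
  "interleave A B k = (if even k then A (k div 2) else B (k div 2))"

lemma interleave_least_row:
  fixes A B :: "nat \<Rightarrow> nat \<Rightarrow> 'a set"
  assumes S: "S = (\<Union>i. \<Inter>j. A i j)" and notS: "- S = (\<Union>i. \<Inter>j. B i j)"
  shows "\<exists>k. x \<in> (\<Inter>j. interleave A B k j)"
    and "even (LEAST k. x \<in> (\<Inter>j. interleave A B k j)) \<longleftrightarrow> x \<in> S"
proof -
  show ex: "\<exists>k. x \<in> (\<Inter>j. interleave A B k j)"
  proof (cases "x \<in> S")
    case True
    then obtain i where "x \<in> (\<Inter>j. interleave A B (2 * i) j)"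
      using S unfolding interleave_def by auto
    then show ?thesis by blast
  next
    case False
    then have "x \<in> - S" by simp
    then obtain i where "x \<in> (\<Inter>j. interleave A B (2 * i + 1) j)"
      using notS unfolding interleave_def by auto
    then show ?thesis by blast
  qed
  define k0 where "k0 = (LEAST k. x \<in> (\<Inter>j. interleave A B k j))"
  have row: "x \<in> (\<Inter>j. interleave A B k0 j)"
    using LeastI_ex[OF ex] unfolding k0_def .
  show "even k0 \<longleftrightarrow> x \<in> S"
  proof (cases "even k0")
    case True
    then have "x \<in> (\<Inter>j. A (k0 div 2) j)"
      using row unfolding interleave_def by simp
    then show ?thesis
      using True S by blast
  next
    case False
    then have "x \<in> (\<Inter>j. B (k0 div 2) j)"
      using row unfolding interleave_def by simp
    then show ?thesis
      using False notS by blast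
  qed
qed

lemma guessable_if_sigma2_definable:
  assumes "sigma2_definable m S" "sigma2_definable m (- S)"
  shows "guessable m S"
proof -
  obtain A B :: "nat \<Rightarrow> nat \<Rightarrow> (nat \<Rightarrow> nat) set"
    where A: "\<forall>i j. definable m (A i j)" "S = (\<Union>i. \<Inter>j. A i j)"
      and B: "\<forall>i j. definable m (B i j)" "- S = (\<Union>i. \<Inter>j. B i j)"
    using assms unfolding sigma2_definable_def by blast
  define R where "R = interleave A B"
  have "\<forall>k j. \<exists>\<sigma>. sentence \<sigma> \<and> DeltaF m \<sigma> \<and> (\<forall>f. fval f \<sigma> \<longleftrightarrow> f \<in> R k j)"
    using A(1) B(1) unfolding R_def interleave_def definable_def by simp
  then obtain d :: "nat \<Rightarrow> nat \<Rightarrow> fml"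
    where d: "\<And>k j. sentence (d k j) \<and> DeltaF m (d k j)" "\<And>k j f. fval f (d k j) \<longleftrightarrow> f \<in> R k j"
    by metis
  obtain Sig and \<phi> :: "nat \<Rightarrow> fml" and pos :: "nat \<Rightarrow> nat \<Rightarrow> nat"
    where enum: "countable Sig"
    "range \<phi> = {\<psi>. sentence \<psi> \<and> DeltaF m \<psi> \<and> syms_fml \<psi> \<subseteq> Sig}" "\<And>k j. \<phi> (pos k j) = d k j"
    using enumerate_sentences[of d m] d(1) by blast
  define G where "G bs = (if even (LEAST k. row_passes pos bs k) then 1 else 0 :: nat)" for bs
  have "(\<lambda>n. G (map (\<lambda>i. fval f (\<phi> i)) [0..<Suc n])) \<longlonglongrightarrow> (if f \<in> S then 1 else 0)" for f
  proof -
    define b where "b i = fval f (\<phi> i)" for i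
    have full_row: "(\<forall>j. b (pos k j)) \<longleftrightarrow> f \<in> (\<Inter>j. R k j)" for k
      unfolding b_def enum(3) d(2) by blast
    have ex: "\<exists>k. \<forall>j. b (pos k j)"
      using interleave_least_row(1)[OF A(2) B(2)] unfolding full_row R_def .
    have "even (LEAST k. \<forall>j. b (pos k j)) \<longleftrightarrow> f \<in> S"
      using interleave_least_row(2)[OF A(2) B(2)] unfolding full_row R_def .
    then have "\<forall>\<^sub>F n in sequentially. G (map b [0..<Suc n]) = (if f \<in> S then 1 else 0)"
      using least_passing_row_eventually[OF ex] unfolding G_def
      by (auto elim: eventually_mono)
    then show ?thesis
      unfolding b_def by (rule tendsto_eventually)
  qed
  then show ?thesis
    unfolding guessable_def using enum(1,2) by (intro exI[of _ Sig] exI[of _ \<phi>] exI[of _ G]) simp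
qed

theorem mainTheorem10:
  fixes m :: nat and S :: "(nat \<Rightarrow> nat) set"
  assumes "S \<in> DeltaP (m + 2)"
  shows "guessable m S"
  using DeltaP_sigma2_definable[OF assms] guessable_if_sigma2_definable by blast

end
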